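(* Let $\ell\ge2$, $r_0,\dots,r_\ell\ge1$ integers, $d_0,\dots,d_\ell$ integers with $d_V=\sum_kd_k=0$ and $d_0+d_1\le0$, and let $c$ be a real number with $c>\max_k d_k/r_k$. Then $\Delta_{\Sigma_2}>0$, where $$\Delta_{\Sigma_2}=\sum_{k=2}^\ell\frac{d_k\big(2r_k(1+r_V)c-(r_V+2)d_k\big)}{(r_V+1)r_Vc\,[r_k(r_V+2)c-2d_k]}+\frac{r_V(r_V+2)(r_V+1)c^2-2(r_V+1)(r_V-r_0-r_1)\mu_{01}c-(r_V+2)(d_1+d_0)\mu_{01}}{r_V(r_V+1)c\,[(r_V+2)c-2\mu_{01}]}.$$
   Context: $r_V=\sum_{k=0}^\ell r_k$ and $\mu_{01}=\frac{d_0+d_1}{r_0+r_1}$. *)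

theory Defs
  imports Complex_Main
begin

definition rV :: "nat \<Rightarrow> (nat \<Rightarrow> int) \<Rightarrow> real" where
  "rV l r = real_of_int (\<Sum>k=0..l. r k)"

definition mu01 :: "(nat \<Rightarrow> int) \<Rightarrow> (nat \<Rightarrow> int) \<Rightarrow> real" where
  "mu01 r d = real_of_int (d 0 + d 1) / real_of_int (r 0 + r 1)"

definition DeltaSigma2 :: "nat \<Rightarrow> (nat \<Rightarrow> int) \<Rightarrow> (nat \<Rightarrow> int) \<Rightarrow> real \<Rightarrow> real" where
  "DeltaSigma2 l r d c =
    (let R = rV l r; \<mu> = mu01 r d in
     (\<Sum>k=2..l. of_int (d k) * (2 * of_int (r k) * (1 + R) * c - (R + 2) * of_int (d k))
        / ((R + 1) * R * c * (of_int (r k) * (R + 2) * c - 2 * of_int (d k))))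
     + (R * (R + 2) * (R + 1) * c^2 - 2 * (R + 1) * (R - of_int (r 0) - of_int (r 1)) * \<mu> * c
        - (R + 2) * of_int (d 1 + d 0) * \<mu>)
       / (R * (R + 1) * c * ((R + 2) * c - 2 * \<mu>)))"

end

theory Submission
  imports Defs
begin

text \<open>Each summand with k \<ge> 2 is bounded below by a quantity linear in (d_k, r_k), with
  coefficients depending only on r_V and c. Summing these bounds, the constraint
  d_V = 0 turns the sum of the d_k (k \<ge> 2) into -(d_0 + d_1), so everything reduces to the
  r_k and d_k with k \<le> 1, and there the resulting expression is an explicit
  positive quotient because \<mu>_01 \<le> 0 < c.\<close>

lemma summand_ge_linear:
  fixes R r d c :: real
  assumes R: "R > 0" and r: "r > 0" and c: "c > 0" and dc: "d < r * c"
  shows "d * (2 * r * (1 + R) * c - (R + 2) * d) / ((R + 1) * R * c * (r * (R + 2) * c - 2 * d))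
     \<ge> (R + 2) / (2 * R * (R + 1) * c) * d - 1 / (2 * (R + 1)) * r"
proof -
  have "2 * d < 2 * (r * c)" using dc by simp
  also have "\<dots> \<le> r * (R + 2) * c" using R r c by (simp add: algebra_simps)
  finally have D: "r * (R + 2) * c - 2 * d > 0" by simp
  define Q where "Q = (R + 1) * R * c * (r * (R + 2) * c - 2 * d)"
  define P where "P = 2 * R * (R + 1) * c"
  have Q_pos: "Q > 0" unfolding Q_def using D R c by simp
  have P_pos: "P > 0" unfolding P_def using R c by simp
  have gap: "d * (2 * r * (1 + R) * c - (R + 2) * d) * P - ((R + 2) * d - R * r * c) * Q
     = R * (R + 2) * r * c * (r * c - d) * ((R + 1) * R * c)"
    unfolding P_def Q_def by (simp add: algebra_simps power2_eq_square)
  have gap_pos: "R * (R + 2) * r * c * (r * c - d) * ((R + 1) * R * c) > 0"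
    using R r c dc by simp
  have rhs: "(R + 2) / (2 * R * (R + 1) * c) * d - 1 / (2 * (R + 1)) * r
      = ((R + 2) * d - R * r * c) / P"
    unfolding P_def using R c by (simp add: divide_simps) (simp add: algebra_simps)
  have "((R + 2) * d - R * r * c) / P \<le> d * (2 * r * (1 + R) * c - (R + 2) * d) / Q"
    using P_pos Q_pos gap gap_pos by (simp add: divide_simps)
  then show ?thesis unfolding rhs Q_def .
qed

lemma sum_summands_ge_linear:
  fixes R c :: real and r d :: "'a \<Rightarrow> real"
  assumes "R > 0" "c > 0" "\<And>k. k \<in> K \<Longrightarrow> r k > 0" "\<And>k. k \<in> K \<Longrightarrow> d k < r k * c"
  shows "(\<Sum>k\<in>K. d k * (2 * r k * (1 + R) * c - (R + 2) * d k)
            / ((R + 1) * R * c * (r k * (R + 2) * c - 2 * d k)))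
     \<ge> (R + 2) / (2 * R * (R + 1) * c) * sum d K - 1 / (2 * (R + 1)) * sum r K"
proof -
  have "(\<Sum>k\<in>K. (R + 2) / (2 * R * (R + 1) * c) * d k - 1 / (2 * (R + 1)) * r k)
     \<le> (\<Sum>k\<in>K. d k * (2 * r k * (1 + R) * c - (R + 2) * d k)
            / ((R + 1) * R * c * (r k * (R + 2) * c - 2 * d k)))"
    using assms by (intro sum_mono summand_ge_linear) auto
  then show ?thesis by (simp add: sum_subtractf sum_distrib_left)
qed

lemma reduced_DeltaSigma2_pos:
  fixes R T s \<mu> c :: real
  assumes RT: "R = s + T" and s: "s > 0" and T: "T > 0" and \<mu>: "\<mu> \<le> 0" and c: "c > 0"
  shows "((R + 2) / (2 * R * (R + 1) * c) * (- (s * \<mu>)) - 1 / (2 * (R + 1)) * T)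
    + (R * (R + 2) * (R + 1) * c^2 - 2 * (R + 1) * T * \<mu> * c - (R + 2) * (s * \<mu>) * \<mu>)
       / (R * (R + 1) * c * ((R + 2) * c - 2 * \<mu>)) > 0"
proof -
  have R: "R > 0" using RT s T by simp
  have "(R + 2) * c > 0" using R c by simp
  then have D: "(R + 2) * c - 2 * \<mu> > 0" using \<mu> by linarith
  define P where "P = 2 * R * (R + 1) * c * ((R + 2) * c - 2 * \<mu>)"
  define N where "N = R * (R + 2) * c * (c * (R + 2 + s) - \<mu> * (s + 2))"
  have P_pos: "P > 0" unfolding P_def using D R c by simp
  have "\<mu> * (s + 2) \<le> 0" using \<mu> s by (simp add: mult_nonpos_nonneg)
  moreover have "c * (R + 2 + s) > 0" using c R s by simp
  ultimately have N_pos: "N > 0" unfolding N_def using R c by (intro mult_pos_pos) auto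
  have "((R + 2) / (2 * R * (R + 1) * c) * (- (s * \<mu>)) - 1 / (2 * (R + 1)) * T)
    + (R * (R + 2) * (R + 1) * c^2 - 2 * (R + 1) * T * \<mu> * c - (R + 2) * (s * \<mu>) * \<mu>)
       / (R * (R + 1) * c * ((R + 2) * c - 2 * \<mu>)) = N / P"
    unfolding P_def N_def using R c D RT
    by (simp add: divide_simps) (simp add: algebra_simps power2_eq_square)
  then show ?thesis using P_pos N_pos by simp
qed

lemma sum_atLeast0_split_first_two:
  fixes f :: "nat \<Rightarrow> 'a::comm_monoid_add"
  assumes "l \<ge> 2"
  shows "sum f {0..l} = f 0 + f 1 + sum f {2..l}"
proof -
  have "sum f {0..l} = f 0 + sum f {Suc 0..l}" using assms by (simp add: sum.atLeast_Suc_atMost)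
  also have "sum f {Suc 0..l} = f 1 + sum f {Suc (Suc 0)..l}" using assms
    by (subst sum.atLeast_Suc_atMost) auto
  finally show ?thesis by (simp add: numeral_2_eq_2 add.assoc)
qed

lemma pos_if_sum_zero_and_below_ratios:
  fixes d r :: "'a \<Rightarrow> real" and c :: real
  assumes "finite A" "A \<noteq> {}" "sum d A = 0"
    and "\<And>k. k \<in> A \<Longrightarrow> r k > 0" "\<And>k. k \<in> A \<Longrightarrow> d k < r k * c"
  shows "c > 0"
proof (rule ccontr)
  assume "\<not> c > 0"
  then have "d k < 0" if "k \<in> A" for k
    using assms(4,5)[OF that] mult_nonneg_nonpos[of "r k" c] by linarith
  then have "sum d A < sum (\<lambda>_. 0) A" using assms(1,2) by (intro sum_strict_mono) auto
  then show False using assms(3) by simp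
qed

lemma lt_mult_of_Max_ratio_lt:
  fixes d r :: "'a \<Rightarrow> real"
  assumes "finite A" "k \<in> A" "r k > 0" "Max ((\<lambda>k. d k / r k) ` A) < c"
  shows "d k < r k * c"
proof -
  have "d k / r k \<le> Max ((\<lambda>k. d k / r k) ` A)" using assms(1,2) by (intro Max_ge) auto
  then have "d k / r k < c" using assms(4) by linarith
  then show ?thesis using assms(3) by (simp add: divide_simps mult.commute)
qed

theorem lemma3p21:
  fixes l :: nat and r d :: "nat \<Rightarrow> int" and c :: real
  assumes "l \<ge> 2"
    and "\<forall>k\<in>{0..l}. r k \<ge> 1"
    and "(\<Sum>k=0..l. d k) = 0"
    and "d 0 + d 1 \<le> 0"
    and "c > Max ((\<lambda>k. real_of_int (d k) / real_of_int (r k)) ` {0..l})"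
  shows "DeltaSigma2 l r d c > 0"
proof -
  have r_pos: "real_of_int (r k) > 0" if "k \<le> l" for k using assms(2) that by force
  have d_lt: "real_of_int (d k) < real_of_int (r k) * c" if "k \<le> l" for k
    using lt_mult_of_Max_ratio_lt[of "{0..l}" k "\<lambda>k. real_of_int (r k)"] r_pos[OF that] that assms(5)
    by simp
  have c_pos: "c > 0"
    by (rule pos_if_sum_zero_and_below_ratios[of "{0..l}" "\<lambda>k. real_of_int (d k)"])
      (use assms(3) r_pos d_lt in \<open>auto simp flip: of_int_sum\<close>)
  define R where "R = rV l r"
  define \<mu> where "\<mu> = mu01 r d"
  define s where "s = real_of_int (r 0 + r 1)"
  define T where "T = (\<Sum>k=2..l. real_of_int (r k))"
  have s_pos: "s > 0" unfolding s_def using r_pos[of 0] r_pos[of 1] assms(1) by simp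
  have T_pos: "T > 0" unfolding T_def using r_pos assms(1) by (intro sum_pos) auto
  have RT: "R = s + T"
    unfolding R_def rV_def s_def T_def of_int_sum using sum_atLeast0_split_first_two[OF assms(1)]
    by simp
  have \<mu>_nonpos: "\<mu> \<le> 0" unfolding \<mu>_def mu01_def using assms(4) s_pos s_def
    by (simp add: divide_nonpos_pos)
  have d01: "real_of_int (d 1 + d 0) = s * \<mu>" unfolding \<mu>_def mu01_def s_def
    using s_pos s_def by (simp add: add.commute)
  have d_tail: "(\<Sum>k=2..l. real_of_int (d k)) = - (s * \<mu>)"
    using sum_atLeast0_split_first_two[OF assms(1), of "\<lambda>k. real_of_int (d k)"] assms(3) d01
    by (simp flip: of_int_sum)
  have T_eq: "R - of_int (r 0) - of_int (r 1) = T" using RT s_def by simp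
  have "(\<Sum>k=2..l. of_int (d k) * (2 * of_int (r k) * (1 + R) * c - (R + 2) * of_int (d k))
        / ((R + 1) * R * c * (of_int (r k) * (R + 2) * c - 2 * of_int (d k))))
     \<ge> (R + 2) / (2 * R * (R + 1) * c) * (- (s * \<mu>)) - 1 / (2 * (R + 1)) * T"
    using sum_summands_ge_linear[of R c "{2..l}" "\<lambda>k. real_of_int (r k)" "\<lambda>k. real_of_int (d k)"]
      RT s_pos T_pos c_pos r_pos d_lt
    unfolding d_tail T_def[symmetric] by simp
  then have "DeltaSigma2 l r d c \<ge> ((R + 2) / (2 * R * (R + 1) * c) * (- (s * \<mu>)) - 1 / (2 * (R + 1)) * T)
     + (R * (R + 2) * (R + 1) * c^2 - 2 * (R + 1) * T * \<mu> * c - (R + 2) * (s * \<mu>) * \<mu>)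
       / (R * (R + 1) * c * ((R + 2) * c - 2 * \<mu>))"
    unfolding DeltaSigma2_def Let_def R_def[symmetric] \<mu>_def[symmetric] T_eq d01 by linarith
  with reduced_DeltaSigma2_pos[OF RT s_pos T_pos \<mu>_nonpos c_pos] show ?thesis by linarith
qed
end
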